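(* Let $g>0$, $p_0<p_1<0$, $[\![\rho]\!]<0$, $\Gamma_{\mathrm{rel}}>0$ and $\lambda>0$. For each integer $n\ge1$, there exists a nontrivial solution $M$ to problem $(P_n)$ if and only if $\lambda=\lambda_n^*$, where $\lambda_n^*$ satisfies $$\frac{g[\![\rho]\!]}{n}=\Gamma_{\mathrm{rel}}^2\coth\Big(\frac{np_1}{\Gamma_{\mathrm{rel}}}\Big)-(\lambda_n^* )^2\coth\Big(\frac{n(p_1-p_0)}{\lambda_n^*}\Big).$$ Such a $\lambda_n^*>0$ exists if and only if $$\frac{g[\![\rho]\!]}{n}-\Gamma_{\mathrm{rel}}^2\coth\Big(\frac{np_1}{\Gamma_{\mathrm{rel}}}\Big)<0,$$ and if it exists it is unique. In that case the space of solutions of $(P_n)$ with $\lambda=\lambda_n^*$ is one-dimensional and spanned by $$M_n^*(p)=\begin{cases}\sinh\big(\frac{np}{\Gamma_{\mathrm{rel}}}\big), & p_1<p<0,\\ \mu\sinh\big(\frac{n(p-p_0)}{\lambda_n^*}\big), & p_0<p<p_1,\end{cases}\qquad \mu=\frac{\sinh\big(\frac{np_1}{\Gamma_{\mathrm{rel}}}\big)}{\sinh\big(\frac{n(p_1-p_0)}{\lambda_n^*}\big)} .$$ Finally, there are nontrivial solutions to $(P_0)$ if and only if $\lambda=\lambda_0$, where $\lambda_0^3=-g[\![\rho]\!](p_1-p_0)$.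
   Context: Let $a_\lambda(p)=\Gamma_{\mathrm{rel}}$ for $p_1<p<0$ and $a_\lambda(p)=\lambda$ for $p_0<p<p_1$. For $f$ defined on both sides of $p_1$, $[\![f]\!]=f(p_1^+)-f(p_1^-)$. Problem $(P_n)$, $n\ge1$: find $M\in C([p_0,0])$, $C^2$ on $[p_0,p_1]$ and on $[p_1,0]$, with $a_\lambda^2M_{pp}=n^2M$ on $(p_0,p_1)\cup(p_1,0)$, $[\![a_\lambda^3M_p]\!]=g[\![\rho]\!]M(p_1)$, $M(p_0)=0$, $M(0)=0$. Problem $(P_0)$: same regularity, with $a_\lambda^2M_{pp}=0$ on $(p_0,p_1)\cup(p_1,0)$, $[\![a_\lambda^3M_p]\!]=g[\![\rho]\!]M(p_1)$, $M(p_0)=0$, $M(0)=M(p_1)$. *)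

theory Defs
  imports "HOL-Analysis.Analysis"
begin

definition coth :: "real \<Rightarrow> real" where
  "coth x = cosh x / sinh x"

definition a_lam :: "real \<Rightarrow> real \<Rightarrow> real \<Rightarrow> real \<Rightarrow> real" where
  "a_lam Gam lam p1 p = (if p1 < p then Gam else lam)"

definition C2_on :: "real \<Rightarrow> real \<Rightarrow> (real \<Rightarrow> real) \<Rightarrow> (real \<Rightarrow> real) \<Rightarrow> (real \<Rightarrow> real) \<Rightarrow> bool" where
  "C2_on a b M D1 D2 \<longleftrightarrow>
     (\<forall>x\<in>{a..b}. (M has_real_derivative D1 x) (at x within {a..b}) \<and>
                  (D1 has_real_derivative D2 x) (at x within {a..b})) \<and>
     continuous_on {a..b} D2"

text \<open>Problem (P_n). L1,L2: derivatives of the piece on [p0,p1]; R1,R2: on [p1,0].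
  The jump [[a^3 M_p]] = a(p1+)^3 M_p(p1+) - a(p1-)^3 M_p(p1-).\<close>
definition solP :: "real \<Rightarrow> real \<Rightarrow> real \<Rightarrow> real \<Rightarrow> real \<Rightarrow> real \<Rightarrow> nat \<Rightarrow> (real \<Rightarrow> real) \<Rightarrow> bool" where
  "solP g rj Gam lam p0 p1 n M \<longleftrightarrow>
     continuous_on {p0..0} M \<and>
     (\<exists>L1 L2 R1 R2. C2_on p0 p1 M L1 L2 \<and> C2_on p1 0 M R1 R2 \<and>
        (\<forall>p\<in>{p0<..<p1}. (a_lam Gam lam p1 p)^2 * L2 p = (real n)^2 * M p) \<and>
        (\<forall>p\<in>{p1<..<0}. (a_lam Gam lam p1 p)^2 * R2 p = (real n)^2 * M p) \<and>
        Gam^3 * R1 p1 - lam^3 * L1 p1 = g * rj * M p1) \<and>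
     M p0 = 0 \<and> M 0 = 0"

definition solP0 :: "real \<Rightarrow> real \<Rightarrow> real \<Rightarrow> real \<Rightarrow> real \<Rightarrow> real \<Rightarrow> (real \<Rightarrow> real) \<Rightarrow> bool" where
  "solP0 g rj Gam lam p0 p1 M \<longleftrightarrow>
     continuous_on {p0..0} M \<and>
     (\<exists>L1 L2 R1 R2. C2_on p0 p1 M L1 L2 \<and> C2_on p1 0 M R1 R2 \<and>
        (\<forall>p\<in>{p0<..<p1}. (a_lam Gam lam p1 p)^2 * L2 p = 0) \<and>
        (\<forall>p\<in>{p1<..<0}. (a_lam Gam lam p1 p)^2 * R2 p = 0) \<and>
        Gam^3 * R1 p1 - lam^3 * L1 p1 = g * rj * M p1) \<and>
     M p0 = 0 \<and> M 0 = M p1"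

definition disp :: "real \<Rightarrow> real \<Rightarrow> real \<Rightarrow> real \<Rightarrow> real \<Rightarrow> nat \<Rightarrow> real \<Rightarrow> bool" where
  "disp g rj Gam p0 p1 n ls \<longleftrightarrow>
     g * rj / real n = Gam^2 * coth (real n * p1 / Gam) - ls^2 * coth (real n * (p1 - p0) / ls)"

text \<open>The eigenfunction M_n^* (at p1 both branches agree by the choice of mu).\<close>
definition Mstar :: "real \<Rightarrow> real \<Rightarrow> real \<Rightarrow> nat \<Rightarrow> real \<Rightarrow> real \<Rightarrow> real" where
  "Mstar Gam p0 p1 n ls p =
     (let mu = sinh (real n * p1 / Gam) / sinh (real n * (p1 - p0) / ls) in
      if p1 \<le> p then sinh (real n * p / Gam) else mu * sinh (real n * (p - p0) / ls))"

end

theory Submission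
  imports Defs
begin

text \<open>On each layer the equation is \<open>M'' = (n/a)\<^sup>2 M\<close> with a constant coefficient, so the boundary
  conditions \<open>M(p\<^sub>0) = M(0) = 0\<close> force \<open>M\<close> to be a multiple of \<open>sinh\<close> on either side of \<open>p\<^sub>1\<close>;
  continuity at \<open>p\<^sub>1\<close> ties the two multiples together, and the jump condition leaves a single
  linear equation in the remaining constant, which has a nonzero solution exactly when the
  dispersion relation holds. In terms of \<open>\<lambda>\<close> the relation reads \<open>\<lambda>\<^sup>2 coth(c/\<lambda>) = K\<close> with
  \<open>c = n(p\<^sub>1 - p\<^sub>0) > 0\<close>, and \<open>\<lambda> \<mapsto> \<lambda>\<^sup>2 coth(c/\<lambda>)\<close> increases strictly from \<open>0\<close> to \<open>\<infinity>\<close>, so a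
  positive root exists iff \<open>K > 0\<close> and is then unique. For \<open>(P\<^sub>0)\<close> the solutions are
  piecewise affine, and the condition \<open>M(0) = M(p\<^sub>1)\<close> makes the upper piece constant.\<close>

lemma exp_growth_solution:
  fixes u :: "real \<Rightarrow> real"
  assumes u: "\<And>y. y \<in> {a..b} \<Longrightarrow> (u has_real_derivative k * u y) (at y within {a..b})"
    and x0: "x0 \<in> {a..b}" and x: "x \<in> {a..b}"
  shows "u x = u x0 * exp (k * (x - x0))"
proof -
  have "((\<lambda>y. u y * exp (- (k * y))) has_real_derivative 0) (at y within {a..b})"
    if "y \<in> {a..b}" for y
    using u[OF that] by (auto intro!: derivative_eq_intros)
  then obtain c where "\<forall>y\<in>{a..b}. u y * exp (- (k * y)) = c"
    using has_field_derivative_zero_constant[OF convex_real_interval(5)] by blast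
  then have "u x * exp (- (k * x)) = u x0 * exp (- (k * x0))"
    using x0 x by simp
  then have "u x = u x0 * exp (- (k * x0)) * exp (k * x)"
    by (metis exp_minus_inverse mult.assoc mult.right_neutral)
  then show ?thesis
    by (simp add: exp_add[symmetric] algebra_simps)
qed

lemma continuous_on_eq_on_interior_interval:
  fixes f h :: "real \<Rightarrow> real"
  assumes "a < b" "continuous_on {a..b} f" "continuous_on {a..b} h"
    and "\<And>x. x \<in> {a<..<b} \<Longrightarrow> f x = h x" and "x \<in> {a..b}"
  shows "f x = h x"
proof -
  have "continuous_on (closure {a<..<b}) (\<lambda>x. f x - h x)"
    using assms by (auto intro!: continuous_intros)
  then have "f x - h x = 0"
    using continuous_constant_on_closure[of "{a<..<b}" "\<lambda>x. f x - h x" 0 x] assms by auto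
  then show ?thesis by simp
qed

subsection \<open>Functions of class \<open>C\<^sup>2\<close> on a closed interval\<close>

lemma C2_on_continuous:
  assumes "C2_on a b M D1 D2"
  shows "continuous_on {a..b} M"
  using assms DERIV_continuous unfolding C2_on_def continuous_on_eq_continuous_within by blast

lemma C2_on_continuous_join:
  assumes "a \<le> b" "b \<le> c" "C2_on a b M D1 D2" "C2_on b c M E1 E2"
  shows "continuous_on {a..c} M"
proof -
  have "{a..c} = {a..b} \<union> {b..c}" using assms by auto
  then show ?thesis
    using continuous_on_closed_Un[OF closed_atLeastAtMost closed_atLeastAtMost
        C2_on_continuous[OF assms(3)] C2_on_continuous[OF assms(4)]] by simp
qed

lemma C2_on_if_eq_on:
  assumes "\<And>x. x \<in> {a..b} \<Longrightarrow> M x = f x"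
    and "\<And>x. (f has_real_derivative D1 x) (at x)" "\<And>x. (D1 has_real_derivative D2 x) (at x)"
    and "continuous_on {a..b} D2"
  shows "C2_on a b M D1 D2"
  unfolding C2_on_def
proof (intro conjI ballI assms(4))
  fix x assume x: "x \<in> {a..b}"
  show "(M has_real_derivative D1 x) (at x within {a..b})"
    by (rule has_field_derivative_transform_within[OF
          has_field_derivative_at_within[OF assms(2)] zero_less_one x])
       (use assms(1) in auto)
  show "(D1 has_real_derivative D2 x) (at x within {a..b})"
    by (rule has_field_derivative_at_within[OF assms(3)])
qed

lemma C2_on_sinh_solution:
  fixes M D1 D2 :: "real \<Rightarrow> real"
  assumes "a < b" and C: "C2_on a b M D1 D2"
    and ode: "\<And>x. x \<in> {a<..<b} \<Longrightarrow> D2 x = k\<^sup>2 * M x"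
    and x0: "x0 \<in> {a..b}" "M x0 = 0" and x: "x \<in> {a..b}"
  shows "k * M x = D1 x0 * sinh (k * (x - x0))" and "D1 x = D1 x0 * cosh (k * (x - x0))"
proof -
  have "continuous_on {a..b} (\<lambda>y. k\<^sup>2 * M y)"
    using C2_on_continuous[OF C] by (auto intro!: continuous_intros)
  then have ode_closed: "D2 y = k\<^sup>2 * M y" if "y \<in> {a..b}" for y
    using continuous_on_eq_on_interior_interval[OF \<open>a < b\<close>, of D2] C ode that
    unfolding C2_on_def by blast
  have D: "(M has_real_derivative D1 y) (at y within {a..b})"
    "(D1 has_real_derivative D2 y) (at y within {a..b})" if "y \<in> {a..b}" for y
    using C that unfolding C2_on_def by blast+
  have "((\<lambda>y. D1 y + k * M y) has_real_derivative k * (D1 y + k * M y)) (at y within {a..b})"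
    "((\<lambda>y. D1 y - k * M y) has_real_derivative - k * (D1 y - k * M y)) (at y within {a..b})"
    if "y \<in> {a..b}" for y
    using D[OF that] by (auto intro!: derivative_eq_intros
        simp: ode_closed[OF that] power2_eq_square algebra_simps)
  then have plus: "D1 x + k * M x = D1 x0 * exp (k * (x - x0))"
    and minus: "D1 x - k * M x = D1 x0 * exp (- k * (x - x0))"
    using exp_growth_solution[of a b "\<lambda>y. D1 y + k * M y" k, OF _ x0(1) x]
      exp_growth_solution[of a b "\<lambda>y. D1 y - k * M y" "- k", OF _ x0(1) x] x0(2)
    by simp_all
  have "k * M x = D1 x0 * ((exp (k * (x - x0)) - exp (- k * (x - x0))) / 2)"
    "D1 x = D1 x0 * ((exp (k * (x - x0)) + exp (- k * (x - x0))) / 2)"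
    using plus minus by (simp_all add: field_simps)
  then show "k * M x = D1 x0 * sinh (k * (x - x0))" "D1 x = D1 x0 * cosh (k * (x - x0))"
    by (simp_all add: sinh_def cosh_def)
qed

lemma C2_on_affine_solution:
  fixes M D1 D2 :: "real \<Rightarrow> real"
  assumes "a < b" and C: "C2_on a b M D1 D2" and ode: "\<And>x. x \<in> {a<..<b} \<Longrightarrow> D2 x = 0"
    and x0: "x0 \<in> {a..b}" and x: "x \<in> {a..b}"
  shows "D1 x = D1 x0" and "M x = M x0 + D1 x0 * (x - x0)"
proof -
  have D: "(M has_real_derivative D1 y) (at y within {a..b})"
    "(D1 has_real_derivative D2 y) (at y within {a..b})" if "y \<in> {a..b}" for y
    using C that unfolding C2_on_def by blast+
  have "D2 y = 0" if "y \<in> {a..b}" for y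
    using continuous_on_eq_on_interior_interval[OF \<open>a < b\<close> _ continuous_on_const, of D2 0]
      C ode that unfolding C2_on_def by blast
  then have slope: "D1 y = D1 x0" if "y \<in> {a..b}" for y
    using exp_growth_solution[of a b D1 0, OF _ x0 that] D(2) by simp
  then show "D1 x = D1 x0" using x .
  have "((\<lambda>y. M y - D1 x0 * y) has_real_derivative 0) (at y within {a..b})"
    if "y \<in> {a..b}" for y
    using DERIV_diff[OF D(1)[OF that] DERIV_cmult_Id[of "D1 x0"]] slope[OF that] by simp
  then obtain c where "\<forall>y\<in>{a..b}. M y - D1 x0 * y = c"
    using has_field_derivative_zero_constant[OF convex_real_interval(5)] by blast
  then show "M x = M x0 + D1 x0 * (x - x0)"
    using x0 x by (fastforce simp: algebra_simps)
qed

subsection \<open>The hyperbolic cotangent\<close>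

lemma coth_gt_one: "0 < t \<Longrightarrow> 1 < coth t"
  unfolding coth_def using sinh_less_cosh_real[of t] by (simp add: field_simps)

lemma coth_strict_antimono:
  assumes "0 < s" "s < t"
  shows "coth t < coth s"
proof -
  have "0 < sinh (t - s)" using assms by simp
  then have "cosh t * sinh s < cosh s * sinh t"
    unfolding sinh_diff by (simp add: algebra_simps)
  moreover have "0 < sinh s" "0 < sinh t" using assms by auto
  ultimately show ?thesis unfolding coth_def by (simp add: field_simps)
qed

lemma coth_le_two:
  assumes "1 \<le> t"
  shows "coth t \<le> 2"
proof -
  have "3 \<le> exp (2 * t)"
    using exp_ge_add_one_self[of "2 * t"] assms by linarith
  then have "3 * exp (- t) \<le> exp (2 * t) * exp (- t)" by simp
  also have "\<dots> = exp t" by (simp flip: exp_add)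
  finally have "cosh t \<le> 2 * sinh t"
    unfolding cosh_def sinh_def by (simp add: field_simps)
  then show ?thesis unfolding coth_def using assms by (simp add: field_simps)
qed

text \<open>The right-hand side of the dispersion relation as a function of \<open>\<lambda>\<close>, with \<open>c = n(p\<^sub>1 - p\<^sub>0)\<close>.\<close>

definition scaled_coth :: "real \<Rightarrow> real \<Rightarrow> real" where
  "scaled_coth c l = l\<^sup>2 * coth (c / l)"

lemma scaled_coth_gt_square: "0 < c \<Longrightarrow> 0 < l \<Longrightarrow> l\<^sup>2 < scaled_coth c l"
  unfolding scaled_coth_def using coth_gt_one[of "c / l"] by simp

lemma strict_mono_on_scaled_coth:
  assumes "0 < c"
  shows "strict_mono_on {0<..} (scaled_coth c)"
proof (rule strict_mono_onI)
  fix l1 l2 :: real assume "l1 \<in> {0<..}" "l2 \<in> {0<..}" "l1 < l2"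
  then have l: "0 < l1" "l1 < l2" by auto
  have "coth (c / l1) < coth (c / l2)"
    using coth_strict_antimono l assms by (simp add: frac_less2)
  moreover have "l1\<^sup>2 < l2\<^sup>2" using l by (simp add: power_strict_mono)
  moreover have "0 < coth (c / l1)" using coth_gt_one[of "c / l1"] l assms by simp
  ultimately show "scaled_coth c l1 < scaled_coth c l2"
    unfolding scaled_coth_def by (meson l mult_strict_mono' less_imp_le zero_le_power2)
qed

lemma continuous_on_scaled_coth: "0 < c \<Longrightarrow> continuous_on {0<..} (scaled_coth c)"
  unfolding scaled_coth_def coth_def by (auto intro!: continuous_intros)

text \<open>For \<open>l \<le> c\<close> the value lies between \<open>l\<^sup>2\<close> and \<open>2 l\<^sup>2\<close>, and it always exceeds \<open>l\<^sup>2\<close>;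
  the intermediate value theorem does the rest.\<close>

lemma scaled_coth_attains_iff:
  assumes "0 < c"
  shows "(\<exists>l>0. scaled_coth c l = K) \<longleftrightarrow> 0 < K"
proof
  assume "\<exists>l>0. scaled_coth c l = K"
  then show "0 < K"
    using scaled_coth_gt_square[OF assms] by (metis zero_less_power2 order.strict_trans less_irrefl)
next
  assume K: "0 < K"
  define l1 where "l1 = min c (sqrt K / 2)"
  define l2 where "l2 = sqrt K + c"
  have "l1 \<le> c" by (simp add: l1_def)
  then have l1: "0 < l1" "l1 \<le> l2"
    using assms K real_sqrt_ge_zero[of K] unfolding l2_def by (simp add: l1_def, linarith)
  have "coth (c / l1) \<le> 2" using l1 by (intro coth_le_two) (simp add: l1_def)
  then have "scaled_coth c l1 \<le> 2 * l1\<^sup>2"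
    unfolding scaled_coth_def by (simp add: mult.commute mult_right_mono)
  also have "l1\<^sup>2 \<le> (sqrt K / 2)\<^sup>2" using l1 by (simp add: l1_def power_mono)
  then have "2 * l1\<^sup>2 \<le> K" using K by (simp add: power_divide)
  finally have below: "scaled_coth c l1 \<le> K" .
  have "K \<le> l2\<^sup>2"
    using power_mono[of "sqrt K" l2 2] K assms by (simp add: l2_def)
  also have "\<dots> < scaled_coth c l2"
    using scaled_coth_gt_square[OF assms] l1 by simp
  finally have above: "K \<le> scaled_coth c l2" by simp
  have "continuous_on {l1..l2} (scaled_coth c)"
    by (rule continuous_on_subset[OF continuous_on_scaled_coth[OF assms]]) (use l1 in auto)
  then obtain l where "l1 \<le> l" "scaled_coth c l = K"
    using IVT'[OF below above l1(2)] by auto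
  then show "\<exists>l>0. scaled_coth c l = K" using l1 by (intro exI[of _ l]) auto
qed

subsection \<open>The eigenvalue problem \<open>(P\<^sub>n)\<close>\<close>

lemma disp_iff_scaled_coth:
  "disp g rj Gam p0 p1 n l \<longleftrightarrow>
     scaled_coth (real n * (p1 - p0)) l = Gam\<^sup>2 * coth (real n * p1 / Gam) - g * rj / real n"
  unfolding disp_def scaled_coth_def by (simp add: mult.commute) linarith

lemma solP_sinh_pieces:
  assumes p: "p0 < p1" "p1 < 0" and "0 < Gam" "0 < lam" "1 \<le> n"
    and "solP g rj Gam lam p0 p1 n M"
  obtains A B where "\<forall>p\<in>{p1..0}. M p = A * sinh (real n * p / Gam)"
    and "\<forall>p\<in>{p0..p1}. M p = B * sinh (real n * (p - p0) / lam)"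
    and "real n * Gam\<^sup>2 * A * cosh (real n * p1 / Gam)
           - real n * lam\<^sup>2 * B * cosh (real n * (p1 - p0) / lam) = g * rj * M p1"
proof -
  from \<open>solP g rj Gam lam p0 p1 n M\<close> obtain L1 L2 R1 R2
    where CL: "C2_on p0 p1 M L1 L2" and CR: "C2_on p1 0 M R1 R2"
      and odeL: "\<forall>p\<in>{p0<..<p1}. (a_lam Gam lam p1 p)\<^sup>2 * L2 p = (real n)\<^sup>2 * M p"
      and odeR: "\<forall>p\<in>{p1<..<0}. (a_lam Gam lam p1 p)\<^sup>2 * R2 p = (real n)\<^sup>2 * M p"
      and jump: "Gam ^ 3 * R1 p1 - lam ^ 3 * L1 p1 = g * rj * M p1"
      and bc: "M p0 = 0" "M 0 = 0"
    unfolding solP_def by blast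
  have "L2 p = (real n / lam)\<^sup>2 * M p" if "p \<in> {p0<..<p1}" for p
    using odeL that \<open>0 < lam\<close> by (auto simp: a_lam_def power_divide field_simps)
  note left = C2_on_sinh_solution[OF p(1) CL this _ bc(1)]
  have "R2 p = (real n / Gam)\<^sup>2 * M p" if "p \<in> {p1<..<0}" for p
    using odeR that \<open>0 < Gam\<close> by (auto simp: a_lam_def power_divide field_simps)
  note right = C2_on_sinh_solution[OF p(2) CR this _ bc(2)]
  have n: "real n \<noteq> 0" using \<open>1 \<le> n\<close> by simp
  show thesis
  proof (rule that[of "R1 0 * Gam / real n" "L1 p0 * lam / real n"])
    show "\<forall>p\<in>{p1..0}. M p = R1 0 * Gam / real n * sinh (real n * p / Gam)"
      using right(1) p n \<open>0 < Gam\<close> by (auto simp: field_simps)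
    show "\<forall>p\<in>{p0..p1}. M p = L1 p0 * lam / real n * sinh (real n * (p - p0) / lam)"
      using left(1) p n \<open>0 < lam\<close> by (auto simp: field_simps)
    have "R1 p1 = R1 0 * cosh (real n * p1 / Gam)" "L1 p1 = L1 p0 * cosh (real n * (p1 - p0) / lam)"
      using right(2)[of p1] left(2)[of p1] p by auto
    then show "real n * Gam\<^sup>2 * (R1 0 * Gam / real n) * cosh (real n * p1 / Gam)
        - real n * lam\<^sup>2 * (L1 p0 * lam / real n) * cosh (real n * (p1 - p0) / lam) = g * rj * M p1"
      using jump n by (simp add: power2_eq_square power3_eq_cube ac_simps)
  qed
qed

lemma Mstar_p1_neq_zero:
  assumes "p1 < 0" "0 < Gam" "1 \<le> n"
  shows "Mstar Gam p0 p1 n lam p1 \<noteq> 0"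
  using assms unfolding Mstar_def by (simp add: divide_neg_pos mult_pos_neg)

lemma solP_eq_multiple_Mstar:
  assumes p: "p0 < p1" "p1 < 0" and "0 < Gam" "0 < lam" "1 \<le> n"
    and "solP g rj Gam lam p0 p1 n M"
  obtains A where "\<forall>p\<in>{p0..0}. M p = A * Mstar Gam p0 p1 n lam p"
    and "A \<noteq> 0 \<Longrightarrow> disp g rj Gam p0 p1 n lam"
proof -
  define s1 c1 s2 c2 where "s1 = sinh (real n * p1 / Gam)" and "c1 = cosh (real n * p1 / Gam)"
    and "s2 = sinh (real n * (p1 - p0) / lam)" and "c2 = cosh (real n * (p1 - p0) / lam)"
  have n: "0 < real n" using \<open>1 \<le> n\<close> by simp
  have "s1 < 0" "0 < s2"
    using p n \<open>0 < Gam\<close> \<open>0 < lam\<close> by (simp_all add: s1_def s2_def divide_neg_pos mult_pos_neg)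
  obtain A B where right: "\<forall>p\<in>{p1..0}. M p = A * sinh (real n * p / Gam)"
    and left: "\<forall>p\<in>{p0..p1}. M p = B * sinh (real n * (p - p0) / lam)"
    and jump: "real n * Gam\<^sup>2 * A * c1 - real n * lam\<^sup>2 * B * c2 = g * rj * M p1"
    using solP_sinh_pieces[OF assms] unfolding c1_def c2_def by blast
  text \<open>Continuity at \<open>p\<^sub>1\<close> fixes \<open>B\<close>; this is where the factor \<open>\<mu>\<close> of \<open>Mstar\<close> comes from.\<close>
  have "A * s1 = B * s2" using right[rule_format, of p1] left[rule_format, of p1] p
    by (simp add: s1_def s2_def)
  then have B: "B = A * (s1 / s2)" using \<open>0 < s2\<close> by (simp add: field_simps)
  show thesis
  proof (rule that[of A])
    show "\<forall>p\<in>{p0..0}. M p = A * Mstar Gam p0 p1 n lam p"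
      using right left unfolding Mstar_def B s1_def s2_def by (auto simp: Let_def)
    assume "A \<noteq> 0"
    have "M p1 = A * s1" using right p by (simp add: s1_def)
    with jump have "A * real n * (Gam\<^sup>2 * c1 - lam\<^sup>2 * c2 * s1 / s2) = A * real n * (g * rj * s1 / real n)"
      unfolding B using n by (simp add: algebra_simps)
    then have "Gam\<^sup>2 * c1 - lam\<^sup>2 * c2 * s1 / s2 = g * rj * s1 / real n"
      using \<open>A \<noteq> 0\<close> n by (subst (asm) mult_left_cancel) simp_all
    then have "Gam\<^sup>2 * (c1 / s1) - lam\<^sup>2 * (c2 / s2) = g * rj / real n"
      using \<open>s1 < 0\<close> by (simp add: field_simps)
    then show "disp g rj Gam p0 p1 n lam"
      unfolding disp_def coth_def s1_def s2_def c1_def c2_def by simp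
  qed
qed

lemma Mstar_solves:
  assumes p: "p0 < p1" "p1 < 0" and "0 < Gam" "0 < lam" "1 \<le> n"
    and "disp g rj Gam p0 p1 n lam"
  shows "solP g rj Gam lam p0 p1 n (Mstar Gam p0 p1 n lam)"
proof -
  define M where "M = Mstar Gam p0 p1 n lam"
  define s1 s2 where "s1 = sinh (real n * p1 / Gam)" and "s2 = sinh (real n * (p1 - p0) / lam)"
  define \<mu> where "\<mu> = s1 / s2"
  have n: "0 < real n" using \<open>1 \<le> n\<close> by simp
  have "s1 < 0" "0 < s2"
    using p n \<open>0 < Gam\<close> \<open>0 < lam\<close> by (simp_all add: s1_def s2_def divide_neg_pos mult_pos_neg)
  have left: "M x = \<mu> * sinh (real n * (x - p0) / lam)" if "x \<in> {p0..p1}" for x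
    using that \<open>0 < s2\<close> unfolding M_def Mstar_def \<mu>_def s1_def s2_def
    by (cases "x = p1") (auto simp: Let_def)
  have right: "M x = sinh (real n * x / Gam)" if "x \<in> {p1..0}" for x
    using that unfolding M_def Mstar_def by (simp add: Let_def)
  define L1 L2 where "L1 = (\<lambda>x. \<mu> * (cosh (real n * (x - p0) / lam) * (real n / lam)))"
    and "L2 = (\<lambda>x. \<mu> * (sinh (real n * (x - p0) / lam) * (real n / lam)\<^sup>2))"
  define R1 R2 where "R1 = (\<lambda>x. cosh (real n * x / Gam) * (real n / Gam))"
    and "R2 = (\<lambda>x. sinh (real n * x / Gam) * (real n / Gam)\<^sup>2)"
  have CL: "C2_on p0 p1 M L1 L2"
    by (rule C2_on_if_eq_on[OF left])
      (use \<open>0 < lam\<close> in \<open>auto simp: L1_def L2_def power2_eq_square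
         intro!: derivative_eq_intros continuous_intros\<close>)
  have CR: "C2_on p1 0 M R1 R2"
    by (rule C2_on_if_eq_on[OF right])
      (use \<open>0 < Gam\<close> in \<open>auto simp: R1_def R2_def power2_eq_square
         intro!: derivative_eq_intros continuous_intros\<close>)
  have "\<forall>p\<in>{p0<..<p1}. (a_lam Gam lam p1 p)\<^sup>2 * L2 p = (real n)\<^sup>2 * M p"
    using left \<open>0 < lam\<close> by (auto simp: L2_def a_lam_def power2_eq_square)
  moreover have "\<forall>p\<in>{p1<..<0}. (a_lam Gam lam p1 p)\<^sup>2 * R2 p = (real n)\<^sup>2 * M p"
    using right \<open>0 < Gam\<close> by (auto simp: R2_def a_lam_def power2_eq_square)
  moreover have "Gam ^ 3 * R1 p1 - lam ^ 3 * L1 p1 = g * rj * M p1"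
  proof -
    define c1 c2 where "c1 = cosh (real n * p1 / Gam)" and "c2 = cosh (real n * (p1 - p0) / lam)"
    have "g * rj = real n * Gam\<^sup>2 * (c1 / s1) - real n * lam\<^sup>2 * (c2 / s2)"
      using \<open>disp g rj Gam p0 p1 n lam\<close> n
      unfolding disp_def coth_def s1_def[symmetric] s2_def[symmetric] c1_def c2_def
      by (simp add: field_simps)
    moreover have "M p1 = s1" using right[of p1] p by (simp add: s1_def)
    ultimately have "g * rj * M p1 = real n * Gam\<^sup>2 * c1 - real n * lam\<^sup>2 * (c2 / s2) * s1"
      using \<open>s1 < 0\<close> by (simp add: field_simps)
    moreover have "Gam ^ 3 * R1 p1 = real n * Gam\<^sup>2 * c1"
      using \<open>0 < Gam\<close> by (simp add: R1_def c1_def power2_eq_square power3_eq_cube)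
    moreover have "lam ^ 3 * L1 p1 = real n * lam\<^sup>2 * (c2 / s2) * s1"
      using \<open>0 < lam\<close> by (simp add: L1_def c2_def \<mu>_def power2_eq_square power3_eq_cube)
    ultimately show ?thesis by simp
  qed
  moreover have "M p0 = 0" "M 0 = 0" using left right p by auto
  moreover have "continuous_on {p0..0} M"
    using C2_on_continuous_join[OF _ _ CL CR] p by simp
  ultimately show ?thesis unfolding solP_def M_def[symmetric] using CL CR by blast
qed

lemma solP_nontrivial_iff:
  assumes p: "p0 < p1" "p1 < 0" and "0 < Gam" "0 < lam" "1 \<le> n"
  shows "(\<exists>M. solP g rj Gam lam p0 p1 n M \<and> (\<exists>p\<in>{p0..0}. M p \<noteq> 0))
           \<longleftrightarrow> disp g rj Gam p0 p1 n lam"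
proof
  assume "\<exists>M. solP g rj Gam lam p0 p1 n M \<and> (\<exists>p\<in>{p0..0}. M p \<noteq> 0)"
  then obtain M q where S: "solP g rj Gam lam p0 p1 n M" and q: "q \<in> {p0..0}" "M q \<noteq> 0"
    by blast
  obtain A where "\<forall>p\<in>{p0..0}. M p = A * Mstar Gam p0 p1 n lam p"
    and "A \<noteq> 0 \<Longrightarrow> disp g rj Gam p0 p1 n lam"
    using solP_eq_multiple_Mstar[OF assms S] by blast
  with q show "disp g rj Gam p0 p1 n lam" by force
next
  assume "disp g rj Gam p0 p1 n lam"
  moreover have "Mstar Gam p0 p1 n lam p1 \<noteq> 0"
    using Mstar_p1_neq_zero p \<open>0 < Gam\<close> \<open>1 \<le> n\<close> by blast
  ultimately show "\<exists>M. solP g rj Gam lam p0 p1 n M \<and> (\<exists>p\<in>{p0..0}. M p \<noteq> 0)"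
    using Mstar_solves[OF assms] p by force
qed

subsection \<open>The problem \<open>(P\<^sub>0)\<close>\<close>

lemma solP0_affine_pieces:
  assumes p: "p0 < p1" "p1 < 0" and "0 < Gam" "0 < lam"
    and "solP0 g rj Gam lam p0 p1 M"
  obtains s where "\<forall>p\<in>{p0..p1}. M p = s * (p - p0)" and "\<forall>p\<in>{p1..0}. M p = M p1"
    and "lam ^ 3 * s = - (g * rj * M p1)"
proof -
  from \<open>solP0 g rj Gam lam p0 p1 M\<close> obtain L1 L2 R1 R2
    where CL: "C2_on p0 p1 M L1 L2" and CR: "C2_on p1 0 M R1 R2"
      and odeL: "\<forall>p\<in>{p0<..<p1}. (a_lam Gam lam p1 p)\<^sup>2 * L2 p = 0"
      and odeR: "\<forall>p\<in>{p1<..<0}. (a_lam Gam lam p1 p)\<^sup>2 * R2 p = 0"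
      and jump: "Gam ^ 3 * R1 p1 - lam ^ 3 * L1 p1 = g * rj * M p1"
      and bc: "M p0 = 0" "M 0 = M p1"
    unfolding solP0_def by blast
  have "L2 p = 0" if "p \<in> {p0<..<p1}" for p
    using odeL that \<open>0 < lam\<close> by (auto simp: a_lam_def)
  then have left: "L1 x = L1 p0" "M x = L1 p0 * (x - p0)" if "x \<in> {p0..p1}" for x
    using C2_on_affine_solution[OF p(1) CL _ _ that, of p0] bc(1) p by simp_all
  have "R2 p = 0" if "p \<in> {p1<..<0}" for p
    using odeR that \<open>0 < Gam\<close> by (auto simp: a_lam_def)
  then have right: "M x - M p1 = R1 p1 * (x - p1)" if "x \<in> {p1..0}" for x
    using C2_on_affine_solution(2)[OF p(2) CR _ _ that, of p1] p by simp
  have "R1 p1 = 0" using right[of 0] bc(2) p by simp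
  show thesis
  proof (rule that[of "L1 p0"])
    show "\<forall>p\<in>{p0..p1}. M p = L1 p0 * (p - p0)" using left(2) by blast
    show "\<forall>p\<in>{p1..0}. M p = M p1"
    proof
      fix p assume "p \<in> {p1..0}"
      then show "M p = M p1" using right[of p] \<open>R1 p1 = 0\<close> by simp
    qed
    show "lam ^ 3 * L1 p0 = - (g * rj * M p1)" using jump left(1)[of p1] \<open>R1 p1 = 0\<close> p by simp
  qed
qed

lemma solP0_nontrivial_iff:
  assumes p: "p0 < p1" "p1 < 0" and "0 < Gam" "0 < lam"
  shows "(\<exists>M. solP0 g rj Gam lam p0 p1 M \<and> (\<exists>p\<in>{p0..0}. M p \<noteq> 0))
           \<longleftrightarrow> lam ^ 3 = - g * rj * (p1 - p0)"
proof
  assume "\<exists>M. solP0 g rj Gam lam p0 p1 M \<and> (\<exists>p\<in>{p0..0}. M p \<noteq> 0)"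
  then obtain M q where S: "solP0 g rj Gam lam p0 p1 M" and q: "q \<in> {p0..0}" "M q \<noteq> 0"
    by blast
  obtain s where left: "\<forall>p\<in>{p0..p1}. M p = s * (p - p0)" and right: "\<forall>p\<in>{p1..0}. M p = M p1"
    and jump: "lam ^ 3 * s = - (g * rj * M p1)"
    using solP0_affine_pieces[OF assms S] by blast
  have Mp1: "M p1 = s * (p1 - p0)" using left p by simp
  have "s \<noteq> 0"
    using q left right Mp1 by (cases "q \<le> p1") auto
  moreover have "s * (lam ^ 3 + g * rj * (p1 - p0)) = 0"
    using jump unfolding Mp1 by (simp add: algebra_simps)
  ultimately show "lam ^ 3 = - g * rj * (p1 - p0)" by simp
next
  assume lam: "lam ^ 3 = - g * rj * (p1 - p0)"
  define M where "M = (\<lambda>x::real. min x p1 - p0)"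
  have "solP0 g rj Gam lam p0 p1 M"
    unfolding solP0_def
  proof (intro conjI exI)
    show "C2_on p0 p1 M (\<lambda>_. 1) (\<lambda>_. 0)"
      by (rule C2_on_if_eq_on[of _ _ _ "\<lambda>x. x - p0"])
        (auto simp: M_def intro!: derivative_eq_intros)
    show "C2_on p1 0 M (\<lambda>_. 0) (\<lambda>_. 0)"
      by (rule C2_on_if_eq_on[of _ _ _ "\<lambda>x. p1 - p0"])
        (auto simp: M_def intro!: derivative_eq_intros)
    show "continuous_on {p0..0} M" unfolding M_def by (intro continuous_intros)
    show "Gam ^ 3 * 0 - lam ^ 3 * 1 = g * rj * M p1" using lam by (simp add: M_def)
  qed (use p in \<open>auto simp: M_def\<close>)
  moreover have "M p1 \<noteq> 0" "p1 \<in> {p0..0}" using p by (auto simp: M_def)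
  ultimately show "\<exists>M. solP0 g rj Gam lam p0 p1 M \<and> (\<exists>p\<in>{p0..0}. M p \<noteq> 0)" by blast
qed

lemma solP_eigenvalue_characterization:
  assumes p: "p0 < p1" "p1 < 0" and pos: "0 < Gam" "0 < lam" and n: "1 \<le> n"
  shows "((\<exists>M. solP g rj Gam lam p0 p1 n M \<and> (\<exists>p\<in>{p0..0}. M p \<noteq> 0))
          \<longleftrightarrow> disp g rj Gam p0 p1 n lam)
      \<and> ((\<exists>ls>0. disp g rj Gam p0 p1 n ls)
          \<longleftrightarrow> g * rj / real n - Gam^2 * coth (real n * p1 / Gam) < 0)
      \<and> (\<forall>l1 l2. l1 > 0 \<longrightarrow> l2 > 0 \<longrightarrow> disp g rj Gam p0 p1 n l1 \<longrightarrow>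
            disp g rj Gam p0 p1 n l2 \<longrightarrow> l1 = l2)
      \<and> (disp g rj Gam p0 p1 n lam \<longrightarrow>
            solP g rj Gam lam p0 p1 n (Mstar Gam p0 p1 n lam)
            \<and> (\<exists>p\<in>{p0..0}. Mstar Gam p0 p1 n lam p \<noteq> 0)
            \<and> (\<forall>M. solP g rj Gam lam p0 p1 n M \<longrightarrow>
                  (\<exists>c. \<forall>p\<in>{p0..0}. M p = c * Mstar Gam p0 p1 n lam p)))"
proof (intro conjI impI)
  define c K where "c = real n * (p1 - p0)" and "K = Gam\<^sup>2 * coth (real n * p1 / Gam) - g * rj / real n"
  have "0 < c" using n p by (simp add: c_def)
  have disp: "disp g rj Gam p0 p1 n l \<longleftrightarrow> scaled_coth c l = K" for l
    unfolding c_def K_def by (rule disp_iff_scaled_coth)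
  show "(\<exists>M. solP g rj Gam lam p0 p1 n M \<and> (\<exists>p\<in>{p0..0}. M p \<noteq> 0))
          \<longleftrightarrow> disp g rj Gam p0 p1 n lam"
    by (rule solP_nontrivial_iff[OF p pos n])
  show "(\<exists>ls>0. disp g rj Gam p0 p1 n ls)
          \<longleftrightarrow> g * rj / real n - Gam^2 * coth (real n * p1 / Gam) < 0"
    using scaled_coth_attains_iff[OF \<open>0 < c\<close>] by (simp add: disp K_def)
  show "\<forall>l1 l2. l1 > 0 \<longrightarrow> l2 > 0 \<longrightarrow> disp g rj Gam p0 p1 n l1 \<longrightarrow>
            disp g rj Gam p0 p1 n l2 \<longrightarrow> l1 = l2"
    using strict_mono_on_eqD[OF strict_mono_on_scaled_coth[OF \<open>0 < c\<close>]] by (simp add: disp)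
  assume "disp g rj Gam p0 p1 n lam"
  then show "solP g rj Gam lam p0 p1 n (Mstar Gam p0 p1 n lam)"
    by (rule Mstar_solves[OF p pos n])
  show "\<exists>p\<in>{p0..0}. Mstar Gam p0 p1 n lam p \<noteq> 0"
    using Mstar_p1_neq_zero[OF p(2) pos(1) n] p by (intro bexI[of _ p1]) simp_all
  show "\<forall>M. solP g rj Gam lam p0 p1 n M \<longrightarrow>
      (\<exists>c. \<forall>p\<in>{p0..0}. M p = c * Mstar Gam p0 p1 n lam p)"
    using solP_eq_multiple_Mstar[OF p pos n] by metis
qed

theorem lemma3p3:
  fixes g rj Gam lam p0 p1 :: real
  assumes "g > 0" and "p0 < p1" and "p1 < 0" and "rj < 0" and "Gam > 0" and "lam > 0"
  shows
   "(\<forall>n::nat. n \<ge> 1 \<longrightarrow>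
      ((\<exists>M. solP g rj Gam lam p0 p1 n M \<and> (\<exists>p\<in>{p0..0}. M p \<noteq> 0))
          \<longleftrightarrow> disp g rj Gam p0 p1 n lam)
      \<and> ((\<exists>ls>0. disp g rj Gam p0 p1 n ls)
          \<longleftrightarrow> g * rj / real n - Gam^2 * coth (real n * p1 / Gam) < 0)
      \<and> (\<forall>l1 l2. l1 > 0 \<longrightarrow> l2 > 0 \<longrightarrow> disp g rj Gam p0 p1 n l1 \<longrightarrow>
            disp g rj Gam p0 p1 n l2 \<longrightarrow> l1 = l2)
      \<and> (disp g rj Gam p0 p1 n lam \<longrightarrow>
            solP g rj Gam lam p0 p1 n (Mstar Gam p0 p1 n lam)
            \<and> (\<exists>p\<in>{p0..0}. Mstar Gam p0 p1 n lam p \<noteq> 0)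
            \<and> (\<forall>M. solP g rj Gam lam p0 p1 n M \<longrightarrow>
                  (\<exists>c. \<forall>p\<in>{p0..0}. M p = c * Mstar Gam p0 p1 n lam p))))
    \<and> ((\<exists>M. solP0 g rj Gam lam p0 p1 M \<and> (\<exists>p\<in>{p0..0}. M p \<noteq> 0))
          \<longleftrightarrow> lam^3 = - g * rj * (p1 - p0))"
  using solP_eigenvalue_characterization[OF assms(2,3,5,6)] solP0_nontrivial_iff[OF assms(2,3,5,6)]
  by blast

end
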